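(* Let $X$ be a topological space, $\sigma$ a winning strategy for Player I in the open-open game on $X$, and $\mathcal P$ a family of non-empty open subsets of $X$ closed under $\sigma$. Then for every non-empty open set $V\subseteq X$ there exists $W\in\mathcal P$ such that every $U\in\mathcal P$ with $U\subseteq W$ satisfies $U\cap V\neq\emptyset$.
   Context: Open-open game on $X$: at inning $n$ Player I chooses a non-empty open $A_n\subseteq X$, then Player II chooses a non-empty open $B_n\subseteq A_n$; Player I wins if $\bigcup_nB_n$ is dense in $X$. A strategy for Player I is a function $\sigma$ assigning a non-empty open set to each finite (possibly empty) sequence of non-empty open sets; it is winning if Player I wins every play in which $A_0=\sigma(\emptyset)$ and $A_{n+1}=\sigma(B_0,\dots,B_n)$. $\mathcal P$ is closed under $\sigma$ if $\sigma(\emptyset)\in\mathcal P$ and $\sigma(B_0,\dots,B_n)\in\mathcal P$ whenever $B_0,\dots,B_n\in\mathcal P$. *)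

theory Defs
  imports "HOL-Analysis.Analysis"
begin

text \<open>The list
  [B0,...,Bn] is the history of Player II's moves.\<close>
definition oo_strategy :: "'a topology \<Rightarrow> ('a set list \<Rightarrow> 'a set) \<Rightarrow> bool" where
  "oo_strategy X \<sigma> \<longleftrightarrow>
     (\<forall>bs. (\<forall>b\<in>set bs. openin X b \<and> b \<noteq> {}) \<longrightarrow> openin X (\<sigma> bs) \<and> \<sigma> bs \<noteq> {})"

definition oo_winning_I :: "'a topology \<Rightarrow> ('a set list \<Rightarrow> 'a set) \<Rightarrow> bool" where
  "oo_winning_I X \<sigma> \<longleftrightarrow> oo_strategy X \<sigma> \<and>
     (\<forall>B :: nat \<Rightarrow> 'a set.
        (\<forall>n. openin X (B n) \<and> B n \<noteq> {} \<and> B n \<subseteq> \<sigma> (map B [0..<n]))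
        \<longrightarrow> X closure_of (\<Union>n. B n) = topspace X)"

definition closed_under_strategy :: "('a set list \<Rightarrow> 'a set) \<Rightarrow> 'a set set \<Rightarrow> bool" where
  "closed_under_strategy \<sigma> P \<longleftrightarrow>
     \<sigma> [] \<in> P \<and> (\<forall>bs. bs \<noteq> [] \<and> set bs \<subseteq> P \<longrightarrow> \<sigma> bs \<in> P)"

end

theory Submission
  imports Defs
begin

text \<open>If the theorem failed for some V, Player II could answer every move W \<in> P of Player I
  inside P by a subset of W missing V.  Since P is closed under \<sigma>, this is a legal play
  against \<sigma> that stays in P forever, so the union of Player II's moves misses V and is not
  dense, although \<sigma> is winning.\<close>

fun response_history :: "('b list \<Rightarrow> 'b) \<Rightarrow> ('b \<Rightarrow> 'b) \<Rightarrow> nat \<Rightarrow> 'b list" where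
  "response_history \<sigma> r 0 = []"
| "response_history \<sigma> r (Suc n) = response_history \<sigma> r n @ [r (\<sigma> (response_history \<sigma> r n))]"

lemma map_response_history:
  "map (\<lambda>k. r (\<sigma> (response_history \<sigma> r k))) [0..<n] = response_history \<sigma> r n"
  by (induction n) auto

lemma closed_under_strategy_mem:
  assumes "closed_under_strategy \<sigma> P" and "set bs \<subseteq> P"
  shows "\<sigma> bs \<in> P"
  using assms unfolding closed_under_strategy_def by (cases "bs = []") auto

lemma response_history_subset:
  assumes "closed_under_strategy \<sigma> P" and "\<And>A. A \<in> P \<Longrightarrow> r A \<in> P"
  shows "set (response_history \<sigma> r n) \<subseteq> P"
proof (induction n)
  case (Suc n)
  then show ?case
    using assms(2) closed_under_strategy_mem[OF assms(1) Suc] by simp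
qed simp

lemma strategy_response_history_mem:
  assumes "closed_under_strategy \<sigma> P" and "\<And>A. A \<in> P \<Longrightarrow> r A \<in> P"
  shows "\<sigma> (response_history \<sigma> r n) \<in> P"
  using closed_under_strategy_mem[OF assms(1) response_history_subset[OF assms]] .

lemma winning_I_response_dense:
  assumes win: "oo_winning_I X \<sigma>"
    and P_open: "\<forall>U\<in>P. openin X U \<and> U \<noteq> {}"
    and closed: "closed_under_strategy \<sigma> P"
    and response: "\<And>A. A \<in> P \<Longrightarrow> r A \<in> P \<and> r A \<subseteq> A"
  shows "X closure_of (\<Union>n. r (\<sigma> (response_history \<sigma> r n))) = topspace X"
proof -
  define B where "B n = r (\<sigma> (response_history \<sigma> r n))" for n
  have history: "map B [0..<n] = response_history \<sigma> r n" for n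
    unfolding B_def by (rule map_response_history)
  have "\<sigma> (response_history \<sigma> r n) \<in> P" for n
    using closed response by (blast intro: strategy_response_history_mem)
  then have "openin X (B n) \<and> B n \<noteq> {} \<and> B n \<subseteq> \<sigma> (map B [0..<n])" for n
    using response P_open by (simp add: B_def history)
  with win have "X closure_of (\<Union>n. B n) = topspace X"
    unfolding oo_winning_I_def by blast
  then show ?thesis
    by (simp add: B_def)
qed

theorem lemma6:
  fixes X :: "'a topology" and \<sigma> :: "'a set list \<Rightarrow> 'a set" and P :: "'a set set"
  assumes "oo_winning_I X \<sigma>"
    and "\<forall>U\<in>P. openin X U \<and> U \<noteq> {}"
    and "closed_under_strategy \<sigma> P"
  shows "\<forall>V. openin X V \<and> V \<noteq> {} \<longrightarrow>
           (\<exists>W\<in>P. \<forall>U\<in>P. U \<subseteq> W \<longrightarrow> U \<inter> V \<noteq> {})"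
proof (intro allI impI, rule ccontr)
  fix V
  assume V: "openin X V \<and> V \<noteq> {}"
    and "\<not> (\<exists>W\<in>P. \<forall>U\<in>P. U \<subseteq> W \<longrightarrow> U \<inter> V \<noteq> {})"
  then have "\<forall>W\<in>P. \<exists>U. U \<in> P \<and> U \<subseteq> W \<and> U \<inter> V = {}"
    by blast
  then obtain r where r: "\<And>W. W \<in> P \<Longrightarrow> r W \<in> P \<and> r W \<subseteq> W \<and> r W \<inter> V = {}"
    by (metis bchoice)
  let ?play = "\<Union>n. r (\<sigma> (response_history \<sigma> r n))"
  have "X closure_of ?play = topspace X"
    using winning_I_response_dense[OF assms] r by blast
  moreover have "?play \<inter> V = {}"
    using r strategy_response_history_mem[OF assms(3), of r] by blast
  ultimately show False
    using V dense_intersects_open by blast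
qed

end
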